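(* There exists $\alpha\in(0,1)$ such that $\tilde\zeta(\upsilon)<\alpha<1$ for all $\upsilon\in(0,1)$, where $\tilde\zeta(\upsilon):=\sup_{j\ge1}\zeta_1(\upsilon^j)$.
   Context: The function $\zeta_1$ on $(0,1)$ is $\zeta_1(\upsilon)=\frac{1}{8\log^3\upsilon}\big(9-12\upsilon^2+3\upsilon^4+4\log\upsilon(3+\log^2\upsilon)+\sqrt{R(\upsilon)}\big)$, with $R(\upsilon)=225-504\upsilon^2+342\upsilon^4-72\upsilon^6+9\upsilon^8+(360-288\upsilon^2-72\upsilon^4)\log\upsilon+144\log^2\upsilon+(-120+96\upsilon^2+24\upsilon^4)\log^3\upsilon-96\log^4\upsilon+16\log^6\upsilon$. *)

theory Defs
  imports "HOL-Analysis.Analysis"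
begin

definition R_fun :: "real \<Rightarrow> real" where
  "R_fun u = 225 - 504*u^2 + 342*u^4 - 72*u^6 + 9*u^8
     + (360 - 288*u^2 - 72*u^4) * ln u + 144 * (ln u)^2
     + (-120 + 96*u^2 + 24*u^4) * (ln u)^3 - 96 * (ln u)^4 + 16 * (ln u)^6"

definition zeta1 :: "real \<Rightarrow> real" where
  "zeta1 u = (1 / (8 * (ln u)^3)) *
     (9 - 12*u^2 + 3*u^4 + 4 * ln u * (3 + (ln u)^2) + sqrt (R_fun u))"

definition zeta_tilde :: "real \<Rightarrow> real" where
  "zeta_tilde u = (SUP j\<in>{1::nat..}. zeta1 (u ^ j))"

end

theory Submission
  imports Defs "HOL-Computational_Algebra.Polynomial"
begin

text \<open>
  Because ln u < 0, the bound zeta1 u \<le> 3/4 is equivalent to 6 (ln u)^3 - A \<le> sqrt (R_fun u),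
  where A is the rest of the numerator. With x = - ln u, the difference R_fun u - (6 (ln u)^3 - A)^2
  is 12 times the exponential polynomial p(x) + q(x) e^(-2x) + r(x) e^(-4x). An exponential
  polynomial F is nonnegative on [0, \<infinity>) as soon as F(0) \<ge> 0 and F' - c F \<ge> 0 there, because then
  e^(-ct) F(t) is nondecreasing; six such steps lead to an exponential polynomial with nonnegative
  coefficients. Hence zeta1 (u^j) \<le> 3/4 for all j, and \<alpha> = 4/5 works.
\<close>

definition exp_poly :: "(real poly \<times> real) list \<Rightarrow> real \<Rightarrow> real" where
  "exp_poly ps t = (\<Sum>(p, a)\<leftarrow>ps. poly p t * exp (a * t))"

definition exp_poly_shift_deriv :: "real \<Rightarrow> (real poly \<times> real) list \<Rightarrow> (real poly \<times> real) list" where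
  "exp_poly_shift_deriv c ps = map (\<lambda>(p, a). (pderiv p + smult (a - c) p, a)) ps"

lemma has_real_derivative_exp_poly:
  "(exp_poly ps has_real_derivative exp_poly (exp_poly_shift_deriv c ps) t + c * exp_poly ps t) (at t)"
proof (induction ps)
  case Nil
  then show ?case by (simp add: exp_poly_def exp_poly_shift_deriv_def)
next
  case (Cons pa ps)
  obtain p a where pa: "pa = (p, a)" by fastforce
  have "((\<lambda>t. poly p t * exp (a * t)) has_real_derivative
          poly (pderiv p + smult (a - c) p) t * exp (a * t) + c * (poly p t * exp (a * t))) (at t)"
    by (auto intro!: derivative_eq_intros simp: algebra_simps)
  from DERIV_add[OF this Cons.IH] show ?case
    by (simp add: pa exp_poly_def exp_poly_shift_deriv_def algebra_simps)
qed

lemma nonneg_if_shifted_derivative_nonneg: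
  fixes F F' :: "real \<Rightarrow> real"
  assumes deriv: "\<And>t. 0 \<le> t \<Longrightarrow> (F has_real_derivative F' t) (at t)"
    and shifted_nonneg: "\<And>t. 0 \<le> t \<Longrightarrow> c * F t \<le> F' t"
    and "0 \<le> F 0" "0 \<le> t"
  shows "0 \<le> F t"
proof -
  define G where "G t = exp (- c * t) * F t" for t
  have "(G has_real_derivative exp (- c * t) * (F' t - c * F t)) (at t)" if "0 \<le> t" for t
    unfolding G_def using deriv[OF that]
    by (auto intro!: derivative_eq_intros simp: algebra_simps)
  moreover have "0 \<le> exp (- c * t) * (F' t - c * F t)" if "0 \<le> t" for t
    using shifted_nonneg[OF that] by simp
  ultimately have "G 0 \<le> G t"
    using DERIV_nonneg_imp_nondecreasing[OF \<open>0 \<le> t\<close>] by blast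
  then have "0 \<le> exp (- c * t) * F t"
    using \<open>0 \<le> F 0\<close> by (simp add: G_def)
  then show ?thesis by (simp add: zero_le_mult_iff)
qed

lemma poly_nonneg_if_coeffs_nonneg:
  fixes p :: "real poly"
  assumes "\<forall>x\<in>set (coeffs p). 0 \<le> x" "0 \<le> t"
  shows "0 \<le> poly p t"
proof (cases "p = 0")
  case False
  then have "0 \<le> coeff p i" if "i \<le> degree p" for i
    using assms(1) coeff_in_coeffs[OF False that] by blast
  then show ?thesis
    unfolding poly_altdef using \<open>0 \<le> t\<close> by (intro sum_nonneg) simp
qed simp

fun exp_poly_certificate :: "real list \<Rightarrow> (real poly \<times> real) list \<Rightarrow> bool" where
  "exp_poly_certificate [] ps \<longleftrightarrow> (\<forall>(p, a)\<in>set ps. \<forall>x\<in>set (coeffs p). 0 \<le> x)"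
| "exp_poly_certificate (c # cs) ps \<longleftrightarrow>
     0 \<le> exp_poly ps 0 \<and> exp_poly_certificate cs (exp_poly_shift_deriv c ps)"

lemma exp_poly_nonneg_if_certificate:
  assumes "exp_poly_certificate cs ps" "0 \<le> t"
  shows "0 \<le> exp_poly ps t"
  using assms
proof (induction cs arbitrary: ps t)
  case Nil
  then have "0 \<le> poly p t * exp (a * t)" if "(p, a) \<in> set ps" for p a
  proof -
    have "\<forall>x\<in>set (coeffs p). 0 \<le> x" using Nil.prems(1) that by fastforce
    with \<open>0 \<le> t\<close> show ?thesis by (simp add: poly_nonneg_if_coeffs_nonneg)
  qed
  then show ?case
    unfolding exp_poly_def by (intro sum_list_nonneg) auto
next
  case (Cons c cs)
  show ?case
  proof (rule nonneg_if_shifted_derivative_nonneg[OF has_real_derivative_exp_poly])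
    fix s :: real assume "0 \<le> s"
    then show "c * exp_poly ps s \<le> exp_poly (exp_poly_shift_deriv c ps) s + c * exp_poly ps s"
      using Cons by simp
  qed (use Cons in auto)
qed

lemma zeta1_gap_exp_poly_nonneg:
  fixes x :: real
  assumes "0 \<le> x"
  shows "0 \<le> (12 - 12*x + 7*x^3 - 4*x^4 + x^6) + (-24 - 4*x^3) * exp (-2*x)
              + (12 + 12*x - 3*x^3) * exp (-4*x)"
proof -
  define ps :: "(real poly \<times> real) list" where
    "ps = [([:12, -12, 0, 7, -4, 0, 1:], 0), ([:-24, 0, 0, -4:], -2), ([:12, 12, 0, -3:], -4)]"
  have "exp_poly_certificate [-4, -4, -4, -4, -2, 0] ps"
    by (simp add: ps_def exp_poly_def exp_poly_shift_deriv_def pderiv_pCons)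
  then have "0 \<le> exp_poly ps x"
    using assms by (rule exp_poly_nonneg_if_certificate)
  then show ?thesis
    by (simp add: ps_def exp_poly_def eval_nat_numeral algebra_simps)
qed

lemma R_fun_ge_square:
  fixes u :: real
  assumes "0 < u" "u < 1"
  shows "(6 * (ln u)^3 - (9 - 12*u^2 + 3*u^4 + 4 * ln u * (3 + (ln u)^2)))^2 \<le> R_fun u"
proof -
  define x where "x = - ln u"
  define B where "B = 6 * (ln u)^3 - (9 - 12*u^2 + 3*u^4 + 4 * ln u * (3 + (ln u)^2))"
  define G where "G = (12 - 12*x + 7*x^3 - 4*x^4 + x^6) + (-24 - 4*x^3) * exp (-2*x)
                      + (12 + 12*x - 3*x^3) * exp (-4*x)"
  have "0 \<le> G"
    unfolding G_def using assms by (intro zeta1_gap_exp_poly_nonneg) (simp add: x_def)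
  have "exp (-x) = u" using assms by (simp add: x_def)
  then have exp_x: "exp (-2*x) = u^2" "exp (-4*x) = u^4"
    using exp_of_nat_mult[of 2 "-x"] exp_of_nat_mult[of 4 "-x"] by simp_all
  have "R_fun u - B^2 = 12 * G"
    unfolding G_def exp_x unfolding B_def R_fun_def x_def by algebra
  with \<open>0 \<le> G\<close> show ?thesis
    unfolding B_def[symmetric] by linarith
qed

lemma zeta1_le_three_quarters:
  fixes u :: real
  assumes "0 < u" "u < 1"
  shows "zeta1 u \<le> 3/4"
proof -
  define A where "A = 9 - 12*u^2 + 3*u^4 + 4 * ln u * (3 + (ln u)^2)"
  have "ln u < 0" using assms by simp
  have "6 * (ln u)^3 - A \<le> sqrt (R_fun u)"
    using real_le_rsqrt[OF R_fun_ge_square[OF assms]] by (simp add: A_def)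
  moreover have "1 / (8 * (ln u)^3) \<le> 0"
    using \<open>ln u < 0\<close> by (simp add: divide_nonpos_neg power_less_zero_eq)
  ultimately have "zeta1 u \<le> (1 / (8 * (ln u)^3)) * (6 * (ln u)^3)"
    unfolding zeta1_def A_def[symmetric] by (intro mult_left_mono_neg) simp_all
  also have "\<dots> = 3/4" using \<open>ln u < 0\<close> by simp
  finally show ?thesis .
qed

theorem lemma4p9:
  shows "\<exists>\<alpha>::real. 0 < \<alpha> \<and> \<alpha> < 1 \<and>
           (\<forall>u::real. 0 < u \<and> u < 1 \<longrightarrow>
              bdd_above ((\<lambda>j. zeta1 (u ^ j)) ` {1::nat..}) \<and> zeta_tilde u < \<alpha>)"
proof (intro exI[of _ "4/5"] conjI allI impI)
  fix u :: real
  assume u: "0 < u \<and> u < 1"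
  have bound: "zeta1 (u ^ j) \<le> 3/4" if "j \<in> {1::nat..}" for j
    using u that by (intro zeta1_le_three_quarters) (simp_all add: power_less_one_iff)
  then show "bdd_above ((\<lambda>j. zeta1 (u ^ j)) ` {1::nat..})"
    by (intro bdd_aboveI2)
  have "zeta_tilde u \<le> 3/4"
    unfolding zeta_tilde_def by (rule cSUP_least) (use bound in auto)
  then show "zeta_tilde u < 4/5" by simp
qed simp_all

end
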